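(* Assume (1) $D\in C^4(\mathbb{R}^d)$, $\rho_{eq}\in C^4(\mathbb{R}^d)$ with $\rho_{eq}>0$, and all partial derivatives of $D$ and $\ln\rho_{eq}$ of orders $1$ through $4$ are bounded; (2) $\|\nabla^2D(x)\|$ and $\|\nabla^2\ln\rho_{eq}(x)\|$ are bounded by a polynomial in $x$, and $\inf_xD(x)>0$. Let $g:\mathbb{R}^d\to\mathbb{R}$ be a polynomial. Then there is a function $K(x)$ of at most polynomial growth such that for all $x\in\mathbb{R}^d$ and $\epsilon\in(0,1]$, $$\Big|\int_{\mathbb{R}^d} g(z)\big(\alpha(x,z,\epsilon)-\beta(x,z,\epsilon)\big)q(x,z)\,dz\Big|\le K(x)\epsilon^2.$$
   Context: Define $q(x,z)=(4\pi D(x))^{-d/2}\exp\big(-\frac{|z|^2}{4D(x)}\big)$ for $x,z\in\mathbb{R}^d$, $$\alpha(x,z,\epsilon)=\min\Big(1,\frac{q(x+\epsilon z,z)\,\rho_{eq}(x+\epsilon z)}{q(x,z)\,\rho_{eq}(x)}\Big),\qquad \beta(x,z,\epsilon)=\min\Big(1,\exp\Big(\epsilon\frac{\nabla_xq(x,z)\cdot z}{q(x,z)}+\epsilon\frac{\nabla\rho_{eq}(x)\cdot z}{\rho_{eq}(x)}\Big)\Big),$$ where $\nabla_x$ denotes the gradient in the first argument. *)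

theory Defs
  imports "HOL-Analysis.Analysis"
begin

definition partial :: "'n::finite \<Rightarrow> (real^'n \<Rightarrow> real) \<Rightarrow> real^'n \<Rightarrow> real" where
  "partial i f x = deriv (\<lambda>t. f (x + t *\<^sub>R axis i 1)) 0"

fun partials :: "'n::finite list \<Rightarrow> (real^'n \<Rightarrow> real) \<Rightarrow> real^'n \<Rightarrow> real" where
  "partials [] f = f"
| "partials (i # is) f = partial i (partials is f)"

fun Ck :: "nat \<Rightarrow> (real^'n::finite \<Rightarrow> real) \<Rightarrow> bool" where
  "Ck 0 f = continuous_on UNIV f"
| "Ck (Suc k) f = (continuous_on UNIV f \<and>
     (\<forall>i. (\<forall>x. (\<lambda>t. f (x + t *\<^sub>R axis i 1)) differentiable (at 0)) \<and> Ck k (partial i f)))"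

definition grad :: "(real^'n::finite \<Rightarrow> real) \<Rightarrow> real^'n \<Rightarrow> real^'n" where
  "grad f x = (\<chi> i. partial i f x)"

definition hessian :: "(real^'n::finite \<Rightarrow> real) \<Rightarrow> real^'n \<Rightarrow> real^'n^'n" where
  "hessian f x = (\<chi> i j. partial i (partial j f) x)"

definition polynomial_fun :: "(real^'n::finite \<Rightarrow> real) \<Rightarrow> bool" where
  "polynomial_fun g \<longleftrightarrow> (\<exists>A c. finite A \<and>
     (\<forall>x. g x = (\<Sum>a\<in>A. c a * (\<Prod>i\<in>UNIV. (x $ i) ^ (a i)))))"

definition qker :: "(real^'n::finite \<Rightarrow> real) \<Rightarrow> real^'n \<Rightarrow> real^'n \<Rightarrow> real" where
  "qker D x z = (4 * pi * D x) powr (- real CARD('n) / 2) * exp (- (norm z)\<^sup>2 / (4 * D x))"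

definition alpha :: "(real^'n::finite \<Rightarrow> real) \<Rightarrow> (real^'n \<Rightarrow> real) \<Rightarrow> real^'n \<Rightarrow> real^'n \<Rightarrow> real \<Rightarrow> real" where
  "alpha D \<rho> x z \<epsilon> = min 1 ((qker D (x + \<epsilon> *\<^sub>R z) z * \<rho> (x + \<epsilon> *\<^sub>R z)) / (qker D x z * \<rho> x))"

definition beta :: "(real^'n::finite \<Rightarrow> real) \<Rightarrow> (real^'n \<Rightarrow> real) \<Rightarrow> real^'n \<Rightarrow> real^'n \<Rightarrow> real \<Rightarrow> real" where
  "beta D \<rho> x z \<epsilon> = min 1 (exp (\<epsilon> * ((grad (\<lambda>y. qker D y z) x \<bullet> z) / qker D x z)
                                 + \<epsilon> * ((grad \<rho> x \<bullet> z) / \<rho> x)))"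

end

theory Submission
  imports Defs "HOL-Probability.Distributions"
begin

text \<open>
  Fix x and z and restrict everything to the line t \<mapsto> x + t z.  Writing
  \<phi>(t) = log q(x + t z, z) + log \<rho>(x + t z), the definitions give
  \<alpha> = min 1 (exp (\<phi>(\<epsilon>) - \<phi>(0))) and \<beta> = min 1 (exp (\<epsilon> \<phi>'(0))).  Since min 1 \<circ> exp is
  1-Lipschitz, |\<alpha> - \<beta>| is bounded by the second-order Taylor remainder of \<phi>, i.e. by
  \<epsilon>^2 sup |\<phi>''|; bounded first and second derivatives of D and log \<rho> together with
  inf D > 0 give sup |\<phi>''| \<le> M (1 + |z|)^4 with M independent of x and z.
  Multiplying by the polynomial g and integrating against the Gaussian q(x, \<cdot>), which
  factorises into one-dimensional normal densities of variance 2 D(x), leaves a product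
  of even Gaussian moments; these grow polynomially in D(x), and D(x) grows at most
  linearly in |x| because \<nabla>D is bounded.
\<close>

subsection \<open>Calculus from partial derivatives\<close>

lemma mvt_bound:
  fixes g g' :: "real \<Rightarrow> real"
  assumes der: "\<And>t. min a b \<le> t \<Longrightarrow> t \<le> max a b \<Longrightarrow> (g has_real_derivative g' t) (at t)"
    and bd: "\<And>t. min a b \<le> t \<Longrightarrow> t \<le> max a b \<Longrightarrow> \<bar>g' t\<bar> \<le> B"
  shows "\<bar>g b - g a\<bar> \<le> B * \<bar>b - a\<bar>"
proof (cases a b rule: linorder_cases)
  case less
  then obtain z where z: "a < z" "z < b" "g b - g a = (b - a) * g' z"
    using MVT2[of a b g g'] der by (auto simp: min_def max_def)
  have "\<bar>g' z\<bar> \<le> B" using bd z less by (auto simp: min_def max_def)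
  then show ?thesis using z less by (simp add: abs_mult mult.commute mult_right_mono)
next
  case equal then show ?thesis using bd[of a] by simp
next
  case greater
  then obtain z where z: "b < z" "z < a" "g a - g b = (a - b) * g' z"
    using MVT2[of b a g g'] der by (auto simp: min_def max_def)
  have "\<bar>g' z\<bar> \<le> B" using bd z greater by (auto simp: min_def max_def)
  then show ?thesis using z greater by (simp add: abs_mult mult.commute mult_right_mono abs_minus_commute)
qed

lemma partial_along_axis:
  fixes f :: "real^'n::finite \<Rightarrow> real"
  assumes dif: "\<And>y. (\<lambda>t. f (y + t *\<^sub>R axis i 1)) differentiable (at 0)"
  shows "((\<lambda>s. f (y + s *\<^sub>R axis i 1)) has_real_derivative partial i f (y + t *\<^sub>R axis i 1)) (at t)"
proof -
  have "((\<lambda>u. f ((y + t *\<^sub>R axis i 1) + u *\<^sub>R axis i 1)) has_real_derivative partial i f (y + t *\<^sub>R axis i 1)) (at 0)"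
    using dif[of "y + t *\<^sub>R axis i 1"] unfolding partial_def
    by (simp add: DERIV_deriv_iff_real_differentiable)
  then have "((\<lambda>u. f (y + (u + t) *\<^sub>R axis i 1)) has_real_derivative partial i f (y + t *\<^sub>R axis i 1)) (at 0)"
    by (simp add: algebra_simps scaleR_add_left)
  then show ?thesis using DERIV_shift[of "\<lambda>s. f (y + s *\<^sub>R axis i 1)" _ 0 t] by simp
qed

text \<open>This is the core of the classical "continuous partials imply
  differentiable" argument.\<close>
lemma coordinatewise_increment:
  fixes f :: "real^'n::finite \<Rightarrow> real"
  assumes dif: "\<And>i y. (\<lambda>t. f (y + t *\<^sub>R axis i 1)) differentiable (at 0)"
    and close: "\<And>y i. dist y x < d \<Longrightarrow> \<bar>partial i f y - partial i f x\<bar> \<le> \<eta>"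
    and S: "finite S" and v: "(\<Sum>j\<in>UNIV. \<bar>v$j\<bar>) < d"
  shows "\<bar>f (x + (\<Sum>j\<in>S. v$j *\<^sub>R axis j 1)) - f x - (\<Sum>j\<in>S. v$j * partial j f x)\<bar>
           \<le> \<eta> * (\<Sum>j\<in>S. \<bar>v$j\<bar>)"
  using S
proof (induction S rule: finite_induct)
  case empty then show ?case by simp
next
  case (insert i S)
  define w where "w = x + (\<Sum>j\<in>S. v$j *\<^sub>R axis j 1)"
  have nw: "norm (w - x) \<le> (\<Sum>j\<in>S. \<bar>v$j\<bar>)"
    unfolding w_def using norm_sum[of "\<lambda>j. v$j *\<^sub>R axis j (1::real)" S]
    by (simp add: norm_axis_1)
  have sub: "(\<Sum>j\<in>insert i S. \<bar>v$j\<bar>) \<le> (\<Sum>j\<in>UNIV. \<bar>v$j\<bar>)"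
    by (intro sum_mono2) auto
  have step: "\<bar>(f (w + v$i *\<^sub>R axis i 1) - v$i * partial i f x) - (f (w + 0 *\<^sub>R axis i 1) - 0 * partial i f x)\<bar>
      \<le> \<eta> * \<bar>v$i - 0\<bar>"
  proof (rule mvt_bound[where g'="\<lambda>s. partial i f (w + s *\<^sub>R axis i 1) - partial i f x"])
    fix t assume t: "min 0 (v$i) \<le> t" "t \<le> max 0 (v$i)"
    show "((\<lambda>s. f (w + s *\<^sub>R axis i 1) - s * partial i f x) has_real_derivative
        partial i f (w + t *\<^sub>R axis i 1) - partial i f x) (at t)"
      by (rule derivative_eq_intros partial_along_axis[OF dif] | simp)+
    have "\<bar>t\<bar> \<le> \<bar>v$i\<bar>" using t by (auto simp: min_def max_def split: if_splits)
    then have "dist (w + t *\<^sub>R axis i 1) x \<le> (\<Sum>j\<in>S. \<bar>v$j\<bar>) + \<bar>v$i\<bar>"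
      using nw norm_triangle_ineq[of "w - x" "t *\<^sub>R axis i 1"]
      by (simp add: dist_norm norm_axis_1 algebra_simps)
    also have "\<dots> < d" using sub insert v by simp
    finally show "\<bar>partial i f (w + t *\<^sub>R axis i 1) - partial i f x\<bar> \<le> \<eta>" using close by blast
  qed
  have eqx: "x + (\<Sum>j\<in>insert i S. v$j *\<^sub>R axis j 1) = w + v$i *\<^sub>R axis i 1"
    using insert by (simp add: w_def algebra_simps)
  have IH: "\<bar>f w - f x - (\<Sum>j\<in>S. v$j * partial j f x)\<bar> \<le> \<eta> * (\<Sum>j\<in>S. \<bar>v$j\<bar>)"
    using insert w_def by simp
  have sums: "(\<Sum>j\<in>insert i S. v$j * partial j f x) = v$i * partial i f x + (\<Sum>j\<in>S. v$j * partial j f x)"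
     "(\<Sum>j\<in>insert i S. \<bar>v$j\<bar>) = \<bar>v$i\<bar> + (\<Sum>j\<in>S. \<bar>v$j\<bar>)" using insert by auto
  show ?case unfolding eqx sums using step IH by (simp add: abs_le_iff algebra_simps)
qed

lemma has_derivative_from_partials:
  fixes f :: "real^'n::finite \<Rightarrow> real"
  assumes dif: "\<And>i y. (\<lambda>t. f (y + t *\<^sub>R axis i 1)) differentiable (at 0)"
    and cont: "\<And>i. continuous_on UNIV (partial i f)"
  shows "(f has_derivative (\<lambda>v. \<Sum>i\<in>UNIV. v $ i * partial i f x)) (at x)"
  unfolding has_derivative_at_alt
proof (intro conjI allI impI)
  show "bounded_linear (\<lambda>v. \<Sum>i\<in>UNIV. v $ i * partial i f x)"
    by (intro bounded_linear_sum) (rule bounded_linear_compose[OF bounded_linear_mult_left bounded_linear_vec_nth])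
  fix e :: real assume e: "e > 0"
  define \<eta> where "\<eta> = e / real CARD('n)"
  have eta: "\<eta> > 0" using e by (simp add: \<eta>_def)
  have "\<forall>\<^sub>F y in at x. \<forall>i. dist (partial i f y) (partial i f x) < \<eta>"
  proof (rule eventually_all_finite)
    fix i
    have "isCont (partial i f) x" using cont[of i] continuous_on_eq_continuous_at by blast
    then show "\<forall>\<^sub>F y in at x. dist (partial i f y) (partial i f x) < \<eta>"
      unfolding isCont_def using eta tendsto_iff by blast
  qed
  then obtain d where d: "d > 0"
    and dd: "\<And>y i. y \<noteq> x \<Longrightarrow> dist y x < d \<Longrightarrow> dist (partial i f y) (partial i f x) < \<eta>"
    unfolding eventually_at by blast
  have close: "\<bar>partial i f y - partial i f x\<bar> \<le> \<eta>" if "dist y x < d" for y i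
    using that dd[of y i] eta by (cases "y = x") (auto simp: dist_real_def)
  show "\<exists>d>0. \<forall>y. norm (y - x) < d \<longrightarrow>
      norm (f y - f x - (\<Sum>i\<in>UNIV. (y - x) $ i * partial i f x)) \<le> e * norm (y - x)"
  proof (intro exI[of _ "d / real CARD('n)"] conjI allI impI)
    show "d / real CARD('n) > 0" using d by simp
    fix y assume y: "norm (y - x) < d / real CARD('n)"
    define v where "v = y - x"
    have l1: "(\<Sum>j\<in>UNIV. \<bar>v$j\<bar>) \<le> real CARD('n) * norm v"
      using sum_mono[of UNIV "\<lambda>j. \<bar>v$j\<bar>" "\<lambda>j. norm v"] component_le_norm_cart by auto
    have "(\<Sum>j\<in>UNIV. \<bar>v$j\<bar>) < d" using l1 y by (simp add: v_def field_simps)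
    from coordinatewise_increment[OF dif close finite_class.finite_UNIV this]
    have "\<bar>f y - f x - (\<Sum>j\<in>UNIV. v$j * partial j f x)\<bar> \<le> \<eta> * (\<Sum>j\<in>UNIV. \<bar>v$j\<bar>)"
      using basis_expansion[of v] by (simp add: v_def scalar_mult_eq_scaleR)
    also have "\<dots> \<le> \<eta> * (real CARD('n) * norm v)" using l1 eta by simp
    also have "\<dots> = e * norm v" by (simp add: \<eta>_def)
    finally show "norm (f y - f x - (\<Sum>i\<in>UNIV. (y - x) $ i * partial i f x)) \<le> e * norm (y - x)"
      by (simp add: v_def)
  qed
qed

lemma partial_of_has_derivative:
  fixes f :: "real^'n::finite \<Rightarrow> real"
  assumes "(f has_derivative f') (at x)"
  shows "partial i f x = f' (axis i 1)"
proof -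
  have "((\<lambda>s. x + s *\<^sub>R axis i 1) has_derivative (\<lambda>s. s *\<^sub>R axis i 1)) (at 0)"
    by (rule derivative_eq_intros | simp)+
  from has_derivative_compose[OF this] assms
  have "((\<lambda>s. f (x + s *\<^sub>R axis i 1)) has_derivative (\<lambda>s. f' (s *\<^sub>R axis i 1))) (at 0)"
    by (simp add: o_def)
  moreover have "f' (s *\<^sub>R axis i 1) = s * f' (axis i 1)" for s
    using has_derivative_bounded_linear[OF assms] by (simp add: bounded_linear.linear linear_scale)
  ultimately have "((\<lambda>s. f (x + s *\<^sub>R axis i 1)) has_real_derivative f' (axis i 1)) (at 0)"
    unfolding has_field_derivative_def by (simp add: mult.commute[of _ "f' (axis i 1)"])
  then show ?thesis unfolding partial_def by (rule DERIV_imp_deriv)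
qed

lemma has_derivative_eq_partials:
  fixes f :: "real^'n::finite \<Rightarrow> real"
  assumes "(f has_derivative f') (at x)"
  shows "f' v = (\<Sum>i\<in>UNIV. v $ i * partial i f x)"
proof -
  have lin: "linear f'" using has_derivative_bounded_linear[OF assms] bounded_linear.linear by blast
  have "f' v = f' (\<Sum>i\<in>UNIV. v $ i *\<^sub>R axis i 1)"
    using basis_expansion[of v] by (simp add: scalar_mult_eq_scaleR)
  also have "\<dots> = (\<Sum>i\<in>UNIV. v $ i * f' (axis i 1))"
    using lin by (simp add: linear_sum linear_scale)
  finally show ?thesis using partial_of_has_derivative[OF assms] by simp
qed

lemma Ck_Suc_imp_Ck: "Ck (Suc k) f \<Longrightarrow> Ck k f"
  by (induction k arbitrary: f) auto

lemma Ck_mono: "Ck k f \<Longrightarrow> j \<le> k \<Longrightarrow> Ck j f"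
proof (induction k)
  case 0 then show ?case by simp
next
  case (Suc k) then show ?case using Ck_Suc_imp_Ck le_Suc_eq by blast
qed

lemma Ck_has_derivative:
  fixes f :: "real^'n::finite \<Rightarrow> real"
  assumes "Ck (Suc k) f"
  shows "(f has_derivative (\<lambda>v. \<Sum>i\<in>UNIV. v $ i * partial i f x)) (at x)"
proof (rule has_derivative_from_partials)
  have "Ck 1 f" using assms Ck_mono[of "Suc k" f 1] by simp
  then show "\<And>i y. (\<lambda>t. f (y + t *\<^sub>R axis i 1)) differentiable (at 0)"
    "\<And>i. continuous_on UNIV (partial i f)" by auto
qed

definition dir_deriv :: "(real^'n::finite \<Rightarrow> real) \<Rightarrow> real^'n \<Rightarrow> real^'n \<Rightarrow> real \<Rightarrow> real" where
  "dir_deriv f x z t = (\<Sum>j\<in>UNIV. z$j * partial j f (x + t *\<^sub>R z))"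

definition dir_deriv2 :: "(real^'n::finite \<Rightarrow> real) \<Rightarrow> real^'n \<Rightarrow> real^'n \<Rightarrow> real \<Rightarrow> real" where
  "dir_deriv2 f x z t = (\<Sum>j\<in>UNIV. z$j * dir_deriv (partial j f) x z t)"

lemma has_dir_deriv:
  fixes f :: "real^'n::finite \<Rightarrow> real"
  assumes "(f has_derivative f') (at (x + t *\<^sub>R z))"
  shows "((\<lambda>s. f (x + s *\<^sub>R z)) has_real_derivative dir_deriv f x z t) (at t)"
proof -
  have "((\<lambda>s. x + s *\<^sub>R z) has_derivative (\<lambda>s. s *\<^sub>R z)) (at t)"
    by (rule derivative_eq_intros | simp)+
  from has_derivative_compose[OF this assms]
  have "((\<lambda>s. f (x + s *\<^sub>R z)) has_derivative (\<lambda>s. f' (s *\<^sub>R z))) (at t)"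
    by (simp add: o_def)
  moreover have "f' (s *\<^sub>R z) = s * dir_deriv f x z t" for s
    using has_derivative_bounded_linear[OF assms] has_derivative_eq_partials[OF assms]
    by (simp add: bounded_linear.linear linear_scale dir_deriv_def sum_distrib_left mult_ac)
  ultimately show ?thesis
    unfolding has_field_derivative_def by (simp add: mult.commute[of _ "dir_deriv f x z t"])
qed

lemma has_dir_deriv2:
  fixes f :: "real^'n::finite \<Rightarrow> real"
  assumes "\<And>j. \<exists>G. (partial j f has_derivative G) (at (x + t *\<^sub>R z))"
  shows "(dir_deriv f x z has_real_derivative dir_deriv2 f x z t) (at t)"
  unfolding dir_deriv_def[of f, abs_def] dir_deriv2_def
proof (intro DERIV_sum DERIV_cmult)
  fix j
  obtain G where "(partial j f has_derivative G) (at (x + t *\<^sub>R z))" using assms by blast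
  then show "((\<lambda>t. partial j f (x + t *\<^sub>R z)) has_real_derivative dir_deriv (partial j f) x z t) (at t)"
    by (rule has_dir_deriv)
qed

lemma dir_deriv_bound:
  fixes f :: "real^'n::finite \<Rightarrow> real"
  assumes "\<And>j y. \<bar>partial j f y\<bar> \<le> B"
  shows "\<bar>dir_deriv f x z t\<bar> \<le> real CARD('n) * norm z * B"
proof -
  have "\<bar>dir_deriv f x z t\<bar> \<le> (\<Sum>j\<in>UNIV. \<bar>z$j * partial j f (x + t *\<^sub>R z)\<bar>)"
    unfolding dir_deriv_def by (rule sum_abs)
  also have "\<dots> \<le> (\<Sum>j::'n\<in>UNIV. norm z * B)"
  proof (rule sum_mono)
    fix j
    have "\<bar>z$j\<bar> * \<bar>partial j f (x + t *\<^sub>R z)\<bar> \<le> norm z * B"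
      by (rule mult_mono[OF component_le_norm_cart assms]) auto
    then show "\<bar>z$j * partial j f (x + t *\<^sub>R z)\<bar> \<le> norm z * B" by (simp add: abs_mult)
  qed
  finally show ?thesis by simp
qed

lemma dir_deriv2_bound:
  fixes f :: "real^'n::finite \<Rightarrow> real"
  assumes "\<And>i j y. \<bar>partial i (partial j f) y\<bar> \<le> B"
  shows "\<bar>dir_deriv2 f x z t\<bar> \<le> (real CARD('n) * norm z)^2 * B"
proof -
  have "\<bar>dir_deriv2 f x z t\<bar> \<le> (\<Sum>j\<in>UNIV. \<bar>z$j * dir_deriv (partial j f) x z t\<bar>)"
    unfolding dir_deriv2_def by (rule sum_abs)
  also have "\<dots> \<le> (\<Sum>j::'n\<in>UNIV. norm z * (real CARD('n) * norm z * B))"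
  proof (rule sum_mono)
    fix j
    have "\<bar>z$j\<bar> * \<bar>dir_deriv (partial j f) x z t\<bar> \<le> norm z * (real CARD('n) * norm z * B)"
      by (rule mult_mono[OF component_le_norm_cart dir_deriv_bound[OF assms]]) auto
    then show "\<bar>z$j * dir_deriv (partial j f) x z t\<bar> \<le> norm z * (real CARD('n) * norm z * B)"
      by (simp add: abs_mult)
  qed
  finally show ?thesis by (simp add: power2_eq_square mult_ac)
qed

lemma linear_growth:
  fixes f :: "real^'n::finite \<Rightarrow> real"
  assumes C1: "Ck 1 f" and B: "\<And>j y. \<bar>partial j f y\<bar> \<le> B"
  shows "\<bar>f x\<bar> \<le> (\<bar>f 0\<bar> + real CARD('n) * B) * (1 + norm x)"
proof -
  have B0: "0 \<le> B" using B abs_ge_zero order_trans by blast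
  have "\<bar>f (0 + 1 *\<^sub>R x) - f (0 + 0 *\<^sub>R x)\<bar> \<le> (real CARD('n) * norm x * B) * \<bar>1 - 0\<bar>"
  proof (rule mvt_bound)
    fix t :: real
    show "((\<lambda>t. f (0 + t *\<^sub>R x)) has_real_derivative dir_deriv f 0 x t) (at t)"
      by (rule has_dir_deriv[OF Ck_has_derivative[of 0]]) (use C1 in simp)
    show "\<bar>dir_deriv f 0 x t\<bar> \<le> real CARD('n) * norm x * B"
      by (rule dir_deriv_bound[OF B])
  qed
  then have "\<bar>f x\<bar> \<le> \<bar>f 0\<bar> + real CARD('n) * B * norm x" by (simp add: mult_ac)
  also have "\<dots> \<le> (\<bar>f 0\<bar> + real CARD('n) * B) * (1 + norm x)"
    using B0 by (simp add: algebra_simps)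
  finally show ?thesis .
qed

lemma ln_has_derivative:
  fixes \<rho> :: "real^'n::finite \<Rightarrow> real"
  assumes "Ck 1 \<rho>" "\<And>y. \<rho> y > 0"
  shows "((\<lambda>y. ln (\<rho> y)) has_derivative (\<lambda>v. (1 / \<rho> y) * (\<Sum>i\<in>UNIV. v$i * partial i \<rho> y))) (at y)"
  using has_derivative_compose[OF Ck_has_derivative[of 0 \<rho>] DERIV_ln_divide[OF assms(2), unfolded has_field_derivative_def]]
    assms(1) by (simp add: o_def)

lemma partial_ln:
  fixes \<rho> :: "real^'n::finite \<Rightarrow> real"
  assumes "Ck 1 \<rho>" "\<And>y. \<rho> y > 0"
  shows "partial j (\<lambda>y. ln (\<rho> y)) y = partial j \<rho> y / \<rho> y"
  using partial_of_has_derivative[OF ln_has_derivative[OF assms], of j]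
    partial_of_has_derivative[OF Ck_has_derivative[of 0 \<rho> y], of j] assms(1)
  by simp

lemma partial_ln_has_derivative:
  fixes \<rho> :: "real^'n::finite \<Rightarrow> real"
  assumes "Ck 2 \<rho>" "\<And>y. \<rho> y > 0"
  shows "\<exists>G. (partial j (\<lambda>y. ln (\<rho> y)) has_derivative G) (at y)"
proof -
  have C1: "Ck 1 \<rho>" using Ck_mono[OF assms(1), of 1] by simp
  have C1': "Ck 1 (partial j \<rho>)" using assms(1) by (simp add: numeral_2_eq_2)
  have "partial j (\<lambda>y. ln (\<rho> y)) = (\<lambda>y. partial j \<rho> y / \<rho> y)"
    using partial_ln[OF C1 assms(2)] by auto
  moreover have "(\<lambda>y. partial j \<rho> y / \<rho> y) differentiable (at y)"
    using Ck_has_derivative[of 0 "partial j \<rho>" y] Ck_has_derivative[of 0 \<rho> y] C1 C1' assms(2)[of y]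
    by (intro differentiable_divide) (auto simp: differentiable_def)
  ultimately show ?thesis by (simp add: differentiable_def)
qed

subsection \<open>The logarithm of the proposal kernel\<close>

text \<open>log q(y, z) as a function of d = D(y) (with N = dimension, s = |z|^2) and its first
  two derivatives in d.\<close>
definition log_qker :: "real \<Rightarrow> real \<Rightarrow> real \<Rightarrow> real" where
  "log_qker N s d = -(N/2) * ln (4*pi*d) - s/(4*d)"

definition log_qker' :: "real \<Rightarrow> real \<Rightarrow> real \<Rightarrow> real" where
  "log_qker' N s d = -(N/2)/d + s/(4*d^2)"

definition log_qker'' :: "real \<Rightarrow> real \<Rightarrow> real \<Rightarrow> real" where
  "log_qker'' N s d = (N/2)/d^2 - s/(2*d^3)"

lemma log_qker_deriv:
  assumes "d > 0" shows "((\<lambda>d. log_qker N s d) has_real_derivative log_qker' N s d) (at d)"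
  unfolding log_qker_def log_qker'_def
  apply (rule DERIV_cong)
   apply (rule derivative_eq_intros refl | (use assms in \<open>simp; fail\<close>))+
  using assms apply (auto simp: field_simps power2_eq_square)
  done

lemma log_qker'_deriv:
  assumes "d > 0" shows "((\<lambda>d. log_qker' N s d) has_real_derivative log_qker'' N s d) (at d)"
  unfolding log_qker''_def log_qker'_def
  apply (rule DERIV_cong)
   apply (rule derivative_eq_intros refl | (use assms in \<open>simp; fail\<close>))+
  using assms apply (auto simp: field_simps power2_eq_square power3_eq_cube)
  done

lemma qker_exp:
  fixes D :: "real^'n::finite \<Rightarrow> real"
  assumes "D y > 0"
  shows "qker D y z = exp (log_qker (real CARD('n)) ((norm z)\<^sup>2) (D y))"
proof -
  have "(4 * pi * D y) powr (- real CARD('n) / 2) = exp ((- real CARD('n) / 2) * ln (4 * pi * D y))"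
    using assms by (simp add: powr_def)
  then show ?thesis unfolding qker_def log_qker_def exp_diff by (simp add: exp_minus field_simps)
qed

text \<open>On {d \<ge> c} both derivatives of log q grow at most quadratically in |z|.\<close>
definition kernel_const :: "real \<Rightarrow> real \<Rightarrow> real" where
  "kernel_const N c = N/c + N/c^2 + 1/c^2 + 1/c^3"

lemma quadratic_weight_bound:
  fixes a b u K :: real
  assumes "0 \<le> u" "0 \<le> a" "0 \<le> b" "a + b \<le> K"
  shows "a + b * u^2 \<le> K * (1 + u)^2"
proof -
  have "1 \<le> (1 + u)^2" "u^2 \<le> (1 + u)^2" using assms(1) by (simp_all add: power_mono)
  then have "a * 1 + b * u^2 \<le> a * (1 + u)^2 + b * (1 + u)^2"
    using assms by (intro add_mono mult_left_mono) auto
  then have "a + b * u^2 \<le> (a + b) * (1 + u)^2" by (simp add: algebra_simps)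
  also have "\<dots> \<le> K * (1 + u)^2" using assms(4) by (simp add: mult_right_mono)
  finally show ?thesis .
qed

lemma log_qker'_bound:
  assumes "0 < c" "c \<le> d" "0 \<le> N" "0 \<le> u"
  shows "\<bar>log_qker' N (u^2) d\<bar> \<le> kernel_const N c * (1 + u)^2"
proof -
  have "\<bar>log_qker' N (u^2) d\<bar> \<le> N/(2*d) + u^2/(4*d^2)"
    unfolding log_qker'_def using assms by (simp add: abs_le_iff)
  also have "\<dots> \<le> N/c + (1/c^2) * u^2"
  proof (intro add_mono)
    have "c^2 \<le> 4*d^2" using assms power_mono[of c d 2] zero_le_power2[of d] by linarith
    then have "u^2/(4*d^2) \<le> u^2/c^2" by (rule frac_le[rotated 3]) (use assms in auto)
    then show "u^2/(4*d^2) \<le> (1/c^2) * u^2" by simp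
  qed (use assms in \<open>simp add: frac_le\<close>)
  also have "\<dots> \<le> kernel_const N c * (1 + u)^2"
    using assms by (intro quadratic_weight_bound) (auto simp: kernel_const_def)
  finally show ?thesis .
qed

lemma log_qker''_bound:
  assumes "0 < c" "c \<le> d" "0 \<le> N" "0 \<le> u"
  shows "\<bar>log_qker'' N (u^2) d\<bar> \<le> kernel_const N c * (1 + u)^2"
proof -
  have "\<bar>log_qker'' N (u^2) d\<bar> \<le> N/(2*d^2) + u^2/(2*d^3)"
    unfolding log_qker''_def using assms by (simp add: abs_le_iff)
  also have "\<dots> \<le> N/c^2 + (1/c^3) * u^2"
  proof (intro add_mono)
    have "c^2 \<le> 2*d^2" using assms power_mono[of c d 2] zero_le_power2[of d] by linarith
    then have Nd: "N/(2*d^2) \<le> N/c^2" by (rule frac_le[rotated 3]) (use assms in auto)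
    have "c^3 \<le> 2*d^3" using assms power_mono[of c d 3] zero_le_power[of d 3] by linarith
    then have "u^2/(2*d^3) \<le> u^2/c^3" by (rule frac_le[rotated 3]) (use assms in auto)
    then show "N/(2*d^2) \<le> N/c^2" "u^2/(2*d^3) \<le> (1/c^3) * u^2" using Nd by simp_all
  qed
  also have "\<dots> \<le> kernel_const N c * (1 + u)^2"
    using assms by (intro quadratic_weight_bound) (auto simp: kernel_const_def)
  finally show ?thesis .
qed

subsection \<open>The acceptance probabilities along the line x + t z\<close>

definition phase :: "(real^'n::finite \<Rightarrow> real) \<Rightarrow> (real^'n \<Rightarrow> real) \<Rightarrow> real^'n \<Rightarrow> real^'n \<Rightarrow> real \<Rightarrow> real" where
  "phase D \<rho> x z t = log_qker (real CARD('n)) ((norm z)\<^sup>2) (D (x + t *\<^sub>R z)) + ln (\<rho> (x + t *\<^sub>R z))"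

definition phase' :: "(real^'n::finite \<Rightarrow> real) \<Rightarrow> (real^'n \<Rightarrow> real) \<Rightarrow> real^'n \<Rightarrow> real^'n \<Rightarrow> real \<Rightarrow> real" where
  "phase' D \<rho> x z t = log_qker' (real CARD('n)) ((norm z)\<^sup>2) (D (x + t *\<^sub>R z)) * dir_deriv D x z t
     + dir_deriv (\<lambda>y. ln (\<rho> y)) x z t"

definition phase'' :: "(real^'n::finite \<Rightarrow> real) \<Rightarrow> (real^'n \<Rightarrow> real) \<Rightarrow> real^'n \<Rightarrow> real^'n \<Rightarrow> real \<Rightarrow> real" where
  "phase'' D \<rho> x z t = log_qker'' (real CARD('n)) ((norm z)\<^sup>2) (D (x + t *\<^sub>R z)) * (dir_deriv D x z t)\<^sup>2
     + log_qker' (real CARD('n)) ((norm z)\<^sup>2) (D (x + t *\<^sub>R z)) * dir_deriv2 D x z t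
     + dir_deriv2 (\<lambda>y. ln (\<rho> y)) x z t"

lemma chain_rule_term_bound:
  fixes q1 q2 h1 h2 r2 a b w :: real
  assumes "\<bar>q2\<bar> \<le> a * w^2" "\<bar>q1\<bar> \<le> a * w^2" "\<bar>h1\<bar> \<le> b * w" "\<bar>h2\<bar> \<le> b * w^2" "\<bar>r2\<bar> \<le> b * w^2"
    and "0 \<le> a" "0 \<le> b" "1 \<le> w"
  shows "\<bar>q2 * h1^2 + q1 * h2 + r2\<bar> \<le> (a * b^2 + a * b + b) * w^4"
proof -
  have "\<bar>h1\<bar>^2 \<le> (b * w)^2" using assms(3) by (intro power_mono) auto
  then have t1: "\<bar>q2 * h1^2\<bar> \<le> (a * w^2) * (b * w)^2"
    using assms by (simp add: abs_mult mult_mono)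
  have t2: "\<bar>q1 * h2\<bar> \<le> (a * w^2) * (b * w^2)"
    using assms by (simp add: abs_mult mult_mono)
  have "w^2 \<le> w^4" using assms(8) by (intro power_increasing) auto
  then have t3: "\<bar>r2\<bar> \<le> b * w^4" using assms(5,7) by (meson mult_left_mono order_trans)
  have "\<bar>q2 * h1^2 + q1 * h2 + r2\<bar> \<le> \<bar>q2 * h1^2\<bar> + \<bar>q1 * h2\<bar> + \<bar>r2\<bar>" by linarith
  also have "\<dots> \<le> (a * w^2) * (b * w)^2 + (a * w^2) * (b * w^2) + b * w^4"
    using t1 t2 t3 by linarith
  also have "\<dots> = (a * b^2 + a * b + b) * w^4" by (simp add: algebra_simps power2_eq_square power4_eq_xxxx)
  finally show ?thesis .
qed

text \<open>The constant M of the pointwise estimate |\<alpha> - \<beta>| \<le> M (1 + |z|)^4 \<epsilon>^2.\<close>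
definition taylor_const :: "real \<Rightarrow> real \<Rightarrow> real \<Rightarrow> real" where
  "taylor_const N B c = kernel_const N c * (N^2 * B)^2 + kernel_const N c * (N^2 * B) + N^2 * B"

lemma taylor2_bound:
  fixes \<phi> \<phi>1 \<phi>2 :: "real \<Rightarrow> real"
  assumes d1: "\<And>t. (\<phi> has_real_derivative \<phi>1 t) (at t)"
    and d2: "\<And>t. (\<phi>1 has_real_derivative \<phi>2 t) (at t)"
    and b: "\<And>t. \<bar>\<phi>2 t\<bar> \<le> M" and e: "0 \<le> \<epsilon>"
  shows "\<bar>\<phi> \<epsilon> - \<phi> 0 - \<epsilon> * \<phi>1 0\<bar> \<le> M * \<epsilon>\<^sup>2"
proof -
  have b1: "\<bar>\<phi>1 t - \<phi>1 0\<bar> \<le> M * \<epsilon>" if t: "0 \<le> t" "t \<le> \<epsilon>" for t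
  proof -
    have "\<bar>\<phi>1 t - \<phi>1 0\<bar> \<le> M * \<bar>t - 0\<bar>"
      by (rule mvt_bound[where g'=\<phi>2]) (use d2 b in auto)
    also have "\<dots> \<le> M * \<epsilon>" using t b[of 0] by (intro mult_left_mono) auto
    finally show ?thesis .
  qed
  have "\<bar>(\<phi> \<epsilon> - \<epsilon> * \<phi>1 0) - (\<phi> 0 - 0 * \<phi>1 0)\<bar> \<le> (M * \<epsilon>) * \<bar>\<epsilon> - 0\<bar>"
  proof (rule mvt_bound[where g'="\<lambda>t. \<phi>1 t - \<phi>1 0"])
    fix t show "((\<lambda>t. \<phi> t - t * \<phi>1 0) has_real_derivative \<phi>1 t - \<phi>1 0) (at t)"
      by (rule derivative_eq_intros d1 refl | simp)+
  next
    fix t assume "min 0 \<epsilon> \<le> t" "t \<le> max 0 \<epsilon>"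
    then show "\<bar>\<phi>1 t - \<phi>1 0\<bar> \<le> M * \<epsilon>" using b1 e by auto
  qed
  then show ?thesis using e by (simp add: power2_eq_square mult_ac)
qed

text \<open>The map a \<mapsto> min 1 (exp a) is 1-Lipschitz; this lets us compare \<alpha> and \<beta> through
  their exponents.\<close>
lemma min_exp_lipschitz_aux:
  fixes a b :: real
  shows "min 1 (exp a) - min 1 (exp b) \<le> \<bar>a - b\<bar>"
proof (cases "a \<le> 0")
  case a: True
  show ?thesis
  proof (cases "b \<le> 0")
    case True
    have "exp (b - a) \<ge> 1 + (b - a)" by (rule exp_ge_add_one_self)
    then have "exp a - exp b \<le> exp a * (a - b)" by (simp add: exp_diff field_simps)
    also have "\<dots> \<le> \<bar>a - b\<bar>"
    proof (cases "a \<le> b")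
      case True
      then have "exp a * (a - b) \<le> 0" by (simp add: mult_nonneg_nonpos)
      then show ?thesis by linarith
    next
      case False
      then have "exp a * (a - b) \<le> 1 * (a - b)" using a by (intro mult_right_mono) auto
      then show ?thesis by simp
    qed
    finally show ?thesis using a True by simp
  next
    case False
    have "exp a \<le> 1" "min 1 (exp a) = exp a" using a by auto
    moreover have "min 1 (exp b) = 1" using False by simp
    ultimately show ?thesis using a False by linarith
  qed
next
  case False
  moreover have "1 - min 1 (exp b) \<le> \<bar>a - b\<bar>" if "b \<le> 0"
  proof -
    have "1 + b \<le> exp b" "min 1 (exp b) = exp b" using that by (auto intro: exp_ge_add_one_self)
    then show ?thesis using False that by linarith
  qed
  ultimately show ?thesis by (cases "b \<le> 0") auto
qed

lemma min_exp_lipschitz: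
  fixes a b :: real
  shows "\<bar>min 1 (exp a) - min 1 (exp b)\<bar> \<le> \<bar>a - b\<bar>"
  using min_exp_lipschitz_aux[of a b] min_exp_lipschitz_aux[of b a] by (simp add: abs_le_iff abs_minus_commute)

context
  fixes D \<rho> :: "real^'n::finite \<Rightarrow> real"
  assumes D_C2: "Ck 2 D" and rho_C2: "Ck 2 \<rho>" and rho_pos: "\<And>y. \<rho> y > 0" and D_pos: "\<And>y. D y > 0"
begin

lemma D_has_derivative: "(D has_derivative (\<lambda>v. \<Sum>i\<in>UNIV. v $ i * partial i D y)) (at y)"
  using Ck_has_derivative[of 1 D] D_C2 by (simp add: numeral_2_eq_2)

lemma D_line_deriv: "((\<lambda>t. D (x + t *\<^sub>R z)) has_real_derivative dir_deriv D x z t) (at t)"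
  by (rule has_dir_deriv[OF D_has_derivative])

lemma phase_deriv: "(phase D \<rho> x z has_real_derivative phase' D \<rho> x z t) (at t)"
proof -
  have rho_line: "((\<lambda>t. ln (\<rho> (x + t *\<^sub>R z))) has_real_derivative dir_deriv (\<lambda>y. ln (\<rho> y)) x z t) (at t)"
    by (rule has_dir_deriv[OF ln_has_derivative]) (use rho_C2 Ck_mono[of 2 \<rho> 1] rho_pos in auto)
  show ?thesis unfolding phase_def[abs_def] phase'_def
    by (intro DERIV_add DERIV_chain2[OF log_qker_deriv[OF D_pos] D_line_deriv] rho_line)
qed

lemma phase'_deriv: "(phase' D \<rho> x z has_real_derivative phase'' D \<rho> x z t) (at t)"
proof -
  have D_line2: "(dir_deriv D x z has_real_derivative dir_deriv2 D x z t) (at t)"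
  proof (rule has_dir_deriv2)
    fix j
    show "\<exists>G. (partial j D has_derivative G) (at (x + t *\<^sub>R z))"
      using Ck_has_derivative[of 0 "partial j D"] D_C2 by (auto simp: numeral_2_eq_2)
  qed
  have rho_line2: "(dir_deriv (\<lambda>y. ln (\<rho> y)) x z has_real_derivative dir_deriv2 (\<lambda>y. ln (\<rho> y)) x z t) (at t)"
    by (intro has_dir_deriv2 partial_ln_has_derivative rho_C2 rho_pos)
  have "(phase' D \<rho> x z has_real_derivative
      (log_qker'' (real CARD('n)) ((norm z)\<^sup>2) (D (x + t *\<^sub>R z)) * dir_deriv D x z t) * dir_deriv D x z t
      + dir_deriv2 D x z t * log_qker' (real CARD('n)) ((norm z)\<^sup>2) (D (x + t *\<^sub>R z))
      + dir_deriv2 (\<lambda>y. ln (\<rho> y)) x z t) (at t)"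
    unfolding phase'_def[abs_def]
    by (intro DERIV_add DERIV_mult DERIV_chain2[OF log_qker'_deriv[OF D_pos] D_line_deriv] D_line2 rho_line2)
  then show ?thesis unfolding phase''_def by (simp add: power2_eq_square mult_ac)
qed

lemma alpha_eq_phase: "alpha D \<rho> x z \<epsilon> = min 1 (exp (phase D \<rho> x z \<epsilon> - phase D \<rho> x z 0))"
  unfolding alpha_def phase_def qker_exp[of D, OF D_pos] exp_diff exp_add
  using rho_pos by simp

lemma beta_eq_phase: "beta D \<rho> x z \<epsilon> = min 1 (exp (\<epsilon> * phase' D \<rho> x z 0))"
proof -
  define N where "N = real CARD('n)"
  define s where "s = (norm z)\<^sup>2"
  have q_exp: "(\<lambda>y. qker D y z) = (\<lambda>y. exp (log_qker N s (D y)))"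
    using qker_exp[of D, OF D_pos] by (auto simp: N_def s_def)
  have dq: "((\<lambda>d. exp (log_qker N s d)) has_real_derivative exp (log_qker N s (D x)) * log_qker' N s (D x)) (at (D x))"
    by (rule DERIV_chain2[OF DERIV_exp log_qker_deriv[OF D_pos]])
  have q_deriv: "((\<lambda>y. qker D y z) has_derivative (\<lambda>v. exp (log_qker N s (D x)) * log_qker' N s (D x) *
      (\<Sum>i\<in>UNIV. v $ i * partial i D x))) (at x)"
    unfolding q_exp using has_derivative_compose[OF D_has_derivative dq[unfolded has_field_derivative_def]]
    by (simp add: o_def)
  have "grad (\<lambda>y. qker D y z) x \<bullet> z = (\<Sum>i\<in>UNIV. z $ i * partial i (\<lambda>y. qker D y z) x)"
    by (simp add: grad_def inner_vec_def mult.commute)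
  also have "\<dots> = exp (log_qker N s (D x)) * log_qker' N s (D x) * dir_deriv D x z 0"
    using has_derivative_eq_partials[OF q_deriv, of z] by (simp add: dir_deriv_def)
  finally have g1: "(grad (\<lambda>y. qker D y z) x \<bullet> z) / qker D x z = log_qker' N s (D x) * dir_deriv D x z 0"
    using qker_exp[of D x z, OF D_pos] by (simp add: N_def s_def)
  have g2: "(grad \<rho> x \<bullet> z) / \<rho> x = dir_deriv (\<lambda>y. ln (\<rho> y)) x z 0"
    using rho_C2 Ck_mono[of 2 \<rho> 1]
    by (simp add: grad_def inner_vec_def dir_deriv_def partial_ln rho_pos sum_divide_distrib mult_ac)
  show ?thesis unfolding beta_def g1 g2 phase'_def N_def s_def by (simp add: distrib_left)
qed


lemma phase''_bound:
  assumes c: "0 < c" "\<And>y. c \<le> D y"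
    and B1: "\<And>i y. \<bar>partial i D y\<bar> \<le> B"
    and B2: "\<And>i j y. \<bar>partial i (partial j D) y\<bar> \<le> B"
    and B3: "\<And>i j y. \<bar>partial i (partial j (\<lambda>y. ln (\<rho> y))) y\<bar> \<le> B"
  shows "\<bar>phase'' D \<rho> x z t\<bar> \<le> taylor_const (real CARD('n)) B c * (1 + norm z)^4"
proof -
  define N where "N = real CARD('n)"
  define w where "w = 1 + norm z"
  have N1: "1 \<le> N" "N \<le> N^2" by (auto simp: N_def power2_eq_square)
  have B0: "0 \<le> B" using B1 abs_ge_zero order_trans by blast
  have w1: "norm z \<le> w" "1 \<le> w" by (auto simp: w_def)
  have NB: "N * B \<le> N^2 * B" using N1 B0 by (simp add: mult_right_mono)
  have h1: "\<bar>dir_deriv D x z t\<bar> \<le> N^2 * B * w"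
  proof -
    have "\<bar>dir_deriv D x z t\<bar> \<le> (N * B) * norm z" using dir_deriv_bound[OF B1] by (simp add: N_def mult_ac)
    also have "\<dots> \<le> (N^2 * B) * w" using NB w1 B0 N1 by (intro mult_mono) auto
    finally show ?thesis .
  qed
  have second: "(N * norm z)^2 * B \<le> N^2 * B * w^2"
    using w1 B0 by (simp add: power_mult_distrib mult_left_mono power_mono mult_ac)
  have h2: "\<bar>dir_deriv2 D x z t\<bar> \<le> N^2 * B * w^2"
    by (rule order_trans[OF dir_deriv2_bound[OF B2]]) (use second in \<open>simp add: N_def\<close>)
  have r2: "\<bar>dir_deriv2 (\<lambda>y. ln (\<rho> y)) x z t\<bar> \<le> N^2 * B * w^2"
    by (rule order_trans[OF dir_deriv2_bound[OF B3]]) (use second in \<open>simp add: N_def\<close>)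
  have q: "\<bar>log_qker' N ((norm z)\<^sup>2) (D (x + t *\<^sub>R z))\<bar> \<le> kernel_const N c * w^2"
    "\<bar>log_qker'' N ((norm z)\<^sup>2) (D (x + t *\<^sub>R z))\<bar> \<le> kernel_const N c * w^2"
    unfolding w_def using c N1 by (auto intro: log_qker'_bound log_qker''_bound)
  have K0: "0 \<le> kernel_const N c" using c N1 by (simp add: kernel_const_def)
  show ?thesis
    unfolding phase''_def taylor_const_def N_def[symmetric] w_def[symmetric]
    by (rule chain_rule_term_bound[OF q(2) q(1) h1 h2 r2 K0 _ w1(2)]) (use B0 in simp)
qed

lemma alpha_beta_pointwise:
  assumes c: "0 < c" "\<And>y. c \<le> D y"
    and B1: "\<And>i y. \<bar>partial i D y\<bar> \<le> B"
    and B2: "\<And>i j y. \<bar>partial i (partial j D) y\<bar> \<le> B"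
    and B3: "\<And>i j y. \<bar>partial i (partial j (\<lambda>y. ln (\<rho> y))) y\<bar> \<le> B"
    and e: "0 \<le> \<epsilon>"
  shows "\<bar>alpha D \<rho> x z \<epsilon> - beta D \<rho> x z \<epsilon>\<bar> \<le> taylor_const (real CARD('n)) B c * (1 + norm z)^4 * \<epsilon>\<^sup>2"
proof -
  have "\<bar>phase D \<rho> x z \<epsilon> - phase D \<rho> x z 0 - \<epsilon> * phase' D \<rho> x z 0\<bar>
      \<le> taylor_const (real CARD('n)) B c * (1 + norm z)^4 * \<epsilon>\<^sup>2"
    by (rule taylor2_bound[OF phase_deriv phase'_deriv phase''_bound[OF c B1 B2 B3] e])
  then show ?thesis
    unfolding alpha_eq_phase beta_eq_phase
    using min_exp_lipschitz[of "phase D \<rho> x z \<epsilon> - phase D \<rho> x z 0" "\<epsilon> * phase' D \<rho> x z 0"]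
    by simp
qed

end


subsection \<open>Gaussian moments\<close>

lemma normal_density_exp:
  assumes "d > 0"
  shows "normal_density 0 (sqrt (2*d)) t = exp (- (1/2) * ln (4*pi*d) - t^2/(4*d))"
proof -
  have s: "(sqrt (2*d))\<^sup>2 = 2*d" using assms by simp
  have a: "1 / sqrt (4*pi*d) = exp (- (1/2) * ln (4*pi*d))"
    using assms by (simp add: exp_minus ln_sqrt[symmetric] inverse_eq_divide)
  have b: "normal_density 0 (sqrt (2*d)) t = (1 / sqrt (4*pi*d)) * exp (- (t^2)/(4*d))"
    unfolding normal_density_def s by (simp add: mult_ac)
  show ?thesis unfolding b a exp_add[symmetric] by simp
qed

lemma qker_product:
  fixes D :: "real^'n::finite \<Rightarrow> real"
  assumes "D x > 0"
  shows "qker D x z = (\<Prod>b\<in>Basis. normal_density 0 (sqrt (2 * D x)) (z \<bullet> b))"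
proof -
  have "(\<Sum>b\<in>Basis. - (1/2) * ln (4*pi*D x) - (z \<bullet> b)^2/(4*D x))
      = (\<Sum>b\<in>(Basis::(real^'n) set). - (1/2) * ln (4*pi*D x)) - (\<Sum>b\<in>Basis. (z \<bullet> b)^2)/(4*D x)"
    by (simp only: sum_subtractf sum_divide_distrib)
  also have "\<dots> = log_qker (real CARD('n)) ((norm z)\<^sup>2) (D x)"
    unfolding log_qker_def power2_norm_eq_inner
    by (subst euclidean_inner) (simp add: power2_eq_square)
  finally show ?thesis
    unfolding qker_exp[of D, OF assms] normal_density_exp[OF assms] exp_sum[OF finite_Basis, symmetric]
    by simp
qed

text \<open>A bound for the 2k-th absolute Gaussian moment of variance 2d (plus the total mass 1).\<close>
definition moment_bound :: "nat \<Rightarrow> real \<Rightarrow> real" where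
  "moment_bound k d = 1 + fact (2 * k) / fact k * d^k"

lemma gaussian_moment_integral:
  assumes "d > 0"
  shows "has_bochner_integral lborel
     (\<lambda>z::real^'n::finite. \<Prod>b\<in>Basis. normal_density 0 (sqrt (2*d)) (z \<bullet> b) * (1 + (z \<bullet> b)^(2*k)))
     (moment_bound k d ^ CARD('n))"
proof -
  define \<sigma> where "\<sigma> = sqrt (2*d)"
  define W where "W = moment_bound k d"
  define w where "w t = normal_density 0 \<sigma> t * (1 + t^(2*k))" for t :: real
  have sp: "\<sigma> > 0" using assms by (simp add: \<sigma>_def)
  have W0: "0 \<le> W" unfolding W_def moment_bound_def using assms by simp
  have hw: "has_bochner_integral lborel w W"
  proof -
    have "has_bochner_integral lborel (\<lambda>x. normal_density 0 \<sigma> x * (x - 0) ^ (2 * 0) + normal_density 0 \<sigma> x * (x - 0) ^ (2 * k))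
      (fact (2 * 0) / ((2 / \<sigma>\<^sup>2)^0 * fact 0) + fact (2 * k) / ((2 / \<sigma>\<^sup>2)^k * fact k))"
      by (intro has_bochner_integral_add normal_moment_even sp)
    moreover have "(2 / \<sigma>\<^sup>2)^k = 1 / d^k" using assms by (simp add: \<sigma>_def power_one_over)
    ultimately show ?thesis unfolding w_def W_def moment_bound_def by (simp add: distrib_left)
  qed
  have wm: "w \<in> borel_measurable borel" unfolding w_def normal_density_def by measurable
  have wnn: "0 \<le> w t" for t unfolding w_def by (intro mult_nonneg_nonneg normal_density_nonneg) auto
  have nw: "(\<integral>\<^sup>+t. ennreal (w t) \<partial>lborel) = ennreal W"
    using nn_integral_eq_integral[OF integrable.intros[OF hw]] hw wnn
    by (simp add: has_bochner_integral_integral_eq)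
  have "(\<integral>\<^sup>+z. (\<Prod>b\<in>(Basis::(real^'n) set). ennreal (w (z \<bullet> b))) \<partial>lborel)
      = (\<Prod>b\<in>(Basis::(real^'n) set). (\<integral>\<^sup>+t. ennreal (w t) \<partial>lborel))"
    by (rule nn_integral_lborel_prod) (use wm in auto)
  also have "\<dots> = ennreal (W ^ CARD('n))" unfolding nw using W0 by (simp add: prod_ennreal ennreal_power)
  finally have "(\<integral>\<^sup>+z. ennreal (\<Prod>b\<in>(Basis::(real^'n) set). w (z \<bullet> b)) \<partial>lborel) = ennreal (W ^ CARD('n))"
    using wnn by (simp add: prod_ennreal)
  then have "has_bochner_integral lborel (\<lambda>z::real^'n. \<Prod>b\<in>Basis. w (z \<bullet> b)) (W ^ CARD('n))"
    by (intro has_bochner_integral_nn_integral) (use wm wnn W0 in \<open>auto intro!: prod_nonneg\<close>)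
  then show ?thesis unfolding w_def W_def \<sigma>_def .
qed

lemma one_plus_sum_le_prod:
  fixes f :: "'a \<Rightarrow> real"
  assumes "finite S" "\<And>i. 0 \<le> f i"
  shows "1 + sum f S \<le> (\<Prod>i\<in>S. 1 + f i)"
  using assms(1)
proof (induction S rule: finite_induct)
  case empty then show ?case by simp
next
  case (insert i S)
  have p1: "1 \<le> (\<Prod>i\<in>S. 1 + f i)" using assms(2) by (intro prod_ge_1) auto
  have "1 + sum f (insert i S) = f i + (1 + sum f S)" using insert by simp
  also have "\<dots> \<le> f i * (\<Prod>i\<in>S. 1 + f i) + (\<Prod>i\<in>S. 1 + f i)"
    using insert p1 assms(2)[of i] by (intro add_mono) (auto intro: mult_le_cancel_left1[THEN iffD2])
  also have "\<dots> = (\<Prod>i\<in>insert i S. 1 + f i)" using insert by (simp add: algebra_simps)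
  finally show ?case .
qed

lemma one_plus_power_le:
  fixes a :: real assumes "0 \<le> a"
  shows "(1 + a)^(2*k) \<le> 4^k * (1 + a^(2*k))"
proof -
  have "(1 + a)^(2*k) \<le> (2 * max 1 a)^(2*k)" using assms by (intro power_mono) auto
  also have "\<dots> = 4^k * (max 1 a)^(2*k)" by (simp add: power_mult_distrib power_mult)
  also have "(max 1 a)^(2*k) \<le> 1 + a^(2*k)" by (cases "a \<le> 1") (auto simp: max_def)
  finally show ?thesis by simp
qed

text \<open>The polynomial weight (1 + |z|)^(2k) is dominated by a product of one-dimensional
  weights, which is what makes the Gaussian integral factorise.\<close>
lemma weight_le_product:
  fixes z :: "real^'n::finite"
  shows "(1 + norm z)^(2*k) \<le> 4^(k * CARD('n)) * (\<Prod>b\<in>Basis. 1 + (z \<bullet> b)^(2*k))"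
proof -
  have "1 + norm z \<le> 1 + (\<Sum>b\<in>Basis. \<bar>z \<bullet> b\<bar>)" using norm_le_l1[of z] by simp
  also have "\<dots> \<le> (\<Prod>b\<in>Basis. 1 + \<bar>z \<bullet> b\<bar>)" by (rule one_plus_sum_le_prod) auto
  finally have "(1 + norm z)^(2*k) \<le> (\<Prod>b\<in>Basis. 1 + \<bar>z \<bullet> b\<bar>)^(2*k)"
    by (intro power_mono) auto
  also have "\<dots> = (\<Prod>b\<in>Basis. (1 + \<bar>z \<bullet> b\<bar>)^(2*k))" by (simp add: prod_power_distrib)
  also have "\<dots> \<le> (\<Prod>b\<in>(Basis::(real^'n) set). 4^k * (1 + (z \<bullet> b)^(2*k)))"
  proof (intro prod_mono conjI)
    fix b :: "real^'n"
    show "0 \<le> (1 + \<bar>z \<bullet> b\<bar>)^(2*k)" by simp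
    show "(1 + \<bar>z \<bullet> b\<bar>)^(2*k) \<le> 4^k * (1 + (z \<bullet> b)^(2*k))"
      using one_plus_power_le[of "\<bar>z \<bullet> b\<bar>" k] by (simp add: power_even_abs)
  qed
  also have "\<dots> = 4^(k * CARD('n)) * (\<Prod>b\<in>Basis. 1 + (z \<bullet> b)^(2*k))"
    by (simp add: prod.distrib power_mult)
  finally show ?thesis .
qed

text \<open>Integrals against q(x, \<cdot>) of functions of polynomial growth are bounded by the
  Gaussian moments.  No integrability is required: non-integrable functions have
  integral 0.\<close>
lemma qker_weighted_integral_bound:
  fixes D f :: "real^'n::finite \<Rightarrow> real"
  assumes D: "D x > 0" and C: "0 \<le> C"
    and f: "\<And>z. \<bar>f z\<bar> \<le> C * (1 + norm z)^(2*k) * qker D x z"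
  shows "\<bar>LINT z|lborel. f z\<bar> \<le> C * 4^(k * CARD('n)) * moment_bound k (D x) ^ CARD('n)"
proof -
  define G where "G z = C * 4^(k * CARD('n)) *
      (\<Prod>b\<in>Basis. normal_density 0 (sqrt (2 * D x)) (z \<bullet> b) * (1 + (z \<bullet> b)^(2*k)))" for z :: "real^'n"
  have G_int: "has_bochner_integral lborel G (C * 4^(k * CARD('n)) * moment_bound k (D x) ^ CARD('n))"
    unfolding G_def by (intro has_bochner_integral_mult_right gaussian_moment_integral D)
  have fG: "\<bar>f z\<bar> \<le> G z" for z
  proof -
    have q0: "0 \<le> qker D x z" unfolding qker_product[of D, OF D] by (intro prod_nonneg normal_density_nonneg)
    have "\<bar>f z\<bar> \<le> C * (4^(k * CARD('n)) * (\<Prod>b\<in>Basis. 1 + (z \<bullet> b)^(2*k))) * qker D x z"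
    proof -
      have "C * (1 + norm z)^(2*k) \<le> C * (4^(k * CARD('n)) * (\<Prod>b\<in>Basis. 1 + (z \<bullet> b)^(2*k)))"
        using C by (intro mult_left_mono weight_le_product)
      then show ?thesis using f[of z] q0 by (meson order_trans mult_right_mono)
    qed
    also have "\<dots> = G z" unfolding G_def qker_product[of D, OF D] by (simp add: prod.distrib mult_ac)
    finally show ?thesis .
  qed
  show ?thesis
  proof (cases "integrable lborel f")
    case True
    from integral_abs_bound_integral[OF True integrable.intros[OF G_int] fG]
    show ?thesis using has_bochner_integral_integral_eq[OF G_int] by simp
  next
    case False
    have "0 \<le> moment_bound k (D x)" using D by (simp add: moment_bound_def)
    then show ?thesis using not_integrable_integral_eq[OF False] C by simp
  qed
qed

subsection \<open>Growth bounds\<close>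

lemma polynomial_growth:
  fixes g :: "real^'n::finite \<Rightarrow> real"
  assumes "polynomial_fun g"
  shows "\<exists>C m. 0 \<le> C \<and> (\<forall>z. \<bar>g z\<bar> \<le> C * (1 + norm z)^m)"
proof -
  obtain A c where A: "finite A" and g: "\<And>x. g x = (\<Sum>a\<in>A. c a * (\<Prod>i\<in>UNIV. (x $ i) ^ (a i)))"
    using assms unfolding polynomial_fun_def by blast
  define m where "m = (\<Sum>a\<in>A. \<Sum>i\<in>UNIV. a i)"
  define C where "C = (\<Sum>a\<in>A. \<bar>c a\<bar>)"
  have monomial: "\<bar>\<Prod>i\<in>UNIV. (z $ i) ^ (a i)\<bar> \<le> (1 + norm z)^m" if a: "a \<in> A" for a z
  proof -
    have "\<bar>\<Prod>i\<in>UNIV. (z $ i) ^ (a i)\<bar> = (\<Prod>i\<in>UNIV. \<bar>z $ i\<bar> ^ (a i))"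
      by (simp add: abs_prod power_abs)
    also have "\<dots> \<le> (\<Prod>i\<in>UNIV. (1 + norm z) ^ (a i))"
      by (intro prod_mono conjI power_mono) (auto intro: order_trans[OF component_le_norm_cart])
    also have "\<dots> = (1 + norm z) ^ (\<Sum>i\<in>UNIV. a i)" by (simp add: power_sum)
    also have "\<dots> \<le> (1 + norm z)^m"
      unfolding m_def by (intro power_increasing member_le_sum[OF a]) (auto simp: A)
    finally show ?thesis .
  qed
  have "\<bar>g z\<bar> \<le> C * (1 + norm z)^m" for z
  proof -
    have "\<bar>g z\<bar> \<le> (\<Sum>a\<in>A. \<bar>c a * (\<Prod>i\<in>UNIV. (z $ i) ^ (a i))\<bar>)" unfolding g by (rule sum_abs)
    also have "\<dots> \<le> (\<Sum>a\<in>A. \<bar>c a\<bar> * (1 + norm z)^m)"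
      by (intro sum_mono) (auto simp: abs_mult intro!: mult_left_mono monomial)
    also have "\<dots> = C * (1 + norm z)^m" by (simp add: C_def sum_distrib_right)
    finally show ?thesis .
  qed
  moreover have "0 \<le> C" by (simp add: C_def sum_nonneg)
  ultimately show ?thesis by blast
qed

lemma moment_bound_growth:
  assumes "0 \<le> d" "d \<le> A * (1 + r)" "0 \<le> A" "0 \<le> r"
  shows "moment_bound k d \<le> moment_bound k A * (1 + r)^k"
proof -
  have "d^k \<le> A^k * (1 + r)^k"
    using assms by (metis power_mono power_mult_distrib)
  moreover have "1 \<le> (1 + r)^k" using assms(4) by simp
  ultimately have "1 + fact (2*k) / fact k * d^k \<le> 1 * (1 + r)^k + fact (2*k) / fact k * (A^k * (1 + r)^k)"
    by (intro add_mono mult_left_mono) auto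
  then show ?thesis unfolding moment_bound_def by (simp add: algebra_simps)
qed

text \<open>Since \<nabla>D is bounded, D grows linearly, hence x \<mapsto> moment_bound k (D x)^n grows
  polynomially; this is the growth of the constant K(x) of the theorem.\<close>
lemma moment_bound_polynomial_growth:
  fixes D :: "real^'n::finite \<Rightarrow> real"
  assumes C1: "Ck 1 D" and pos: "\<And>y. 0 < D y" and B: "\<And>i y. \<bar>partial i D y\<bar> \<le> B"
  shows "\<exists>C m. \<forall>x. \<bar>moment_bound k (D x) ^ CARD('n)\<bar> \<le> C * (1 + norm x)^m"
proof -
  define A where "A = \<bar>D 0\<bar> + real CARD('n) * B"
  have "0 \<le> B" using B[of undefined 0] abs_ge_zero order_trans by blast
  then have A0: "0 \<le> A" by (simp add: A_def)
  have "\<bar>moment_bound k (D x) ^ CARD('n)\<bar> \<le> moment_bound k A ^ CARD('n) * (1 + norm x)^(k * CARD('n))" for x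
  proof -
    have D0: "0 \<le> D x" using pos[of x] by simp
    have "D x \<le> A * (1 + norm x)" using linear_growth[OF C1 B, of x] unfolding A_def by simp
    then have "moment_bound k (D x) \<le> moment_bound k A * (1 + norm x)^k"
      using A0 D0 by (intro moment_bound_growth) auto
    moreover have "0 \<le> moment_bound k (D x)" using D0 by (simp add: moment_bound_def)
    ultimately have "moment_bound k (D x) ^ CARD('n) \<le> (moment_bound k A * (1 + norm x)^k) ^ CARD('n)"
      by (intro power_mono)
    then show ?thesis using \<open>0 \<le> moment_bound k (D x)\<close> by (simp add: power_mult_distrib power_mult)
  qed
  then show ?thesis by blast
qed

lemma uniform_partials_bound:
  fixes f :: "real^'n::finite \<Rightarrow> real"
  assumes "\<And>is. 1 \<le> length is \<Longrightarrow> length is \<le> 2 \<Longrightarrow> bounded (range (partials is f))"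
  shows "\<exists>B. \<forall>i j y. \<bar>partial i f y\<bar> \<le> B \<and> \<bar>partial i (partial j f) y\<bar> \<le> B"
proof -
  have "\<exists>b. \<forall>y. \<bar>partial (fst ij) f y\<bar> + \<bar>partial (fst ij) (partial (snd ij) f) y\<bar> \<le> b" for ij :: "'n \<times> 'n"
  proof -
    obtain b1 where b1: "\<And>y. \<bar>partial (fst ij) f y\<bar> \<le> b1"
      using assms[of "[fst ij]"] by (auto simp: bounded_iff)
    obtain b2 where b2: "\<And>y. \<bar>partial (fst ij) (partial (snd ij) f) y\<bar> \<le> b2"
      using assms[of "[fst ij, snd ij]"] by (auto simp: bounded_iff)
    show ?thesis using add_mono[OF b1 b2] by blast
  qed
  then obtain b where b: "\<And>ij y. \<bar>partial (fst ij) f y\<bar> + \<bar>partial (fst ij) (partial (snd ij) f) y\<bar> \<le> b ij"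
    by metis
  have "\<bar>partial i f y\<bar> \<le> (\<Sum>ij\<in>UNIV. \<bar>b ij\<bar>) \<and> \<bar>partial i (partial j f) y\<bar> \<le> (\<Sum>ij\<in>UNIV. \<bar>b ij\<bar>)" for i j y
    using b[of "(i, j)" y] member_le_sum[of "(i, j)" UNIV "\<lambda>ij. \<bar>b ij\<bar>"] by auto
  then show ?thesis by blast
qed

lemma alpha_beta_integral_bound:
  fixes D \<rho> g :: "real^'n::finite \<Rightarrow> real"
  assumes D_C2: "Ck 2 D" and rho_C2: "Ck 2 \<rho>" and rho_pos: "\<And>y. \<rho> y > 0"
    and c: "0 < c" "\<And>y. c \<le> D y"
    and B1: "\<And>i y. \<bar>partial i D y\<bar> \<le> B"
    and B2: "\<And>i j y. \<bar>partial i (partial j D) y\<bar> \<le> B"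
    and B3: "\<And>i j y. \<bar>partial i (partial j (\<lambda>y. ln (\<rho> y))) y\<bar> \<le> B"
    and g: "\<And>z. \<bar>g z\<bar> \<le> Cg * (1 + norm z)^m" and "0 \<le> Cg" and e: "0 \<le> \<epsilon>"
  shows "\<bar>LINT z|lborel. g z * (alpha D \<rho> x z \<epsilon> - beta D \<rho> x z \<epsilon>) * qker D x z\<bar>
    \<le> Cg * taylor_const (real CARD('n)) B c * 4^((m + 4) * CARD('n))
       * moment_bound (m + 4) (D x) ^ CARD('n) * \<epsilon>\<^sup>2"
proof -
  define M where "M = taylor_const (real CARD('n)) B c"
  have D_pos: "D y > 0" for y using c less_le_trans by blast
  have "0 \<le> B" using B1[of undefined 0] abs_ge_zero order_trans by blast
  then have M0: "0 \<le> M"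
    unfolding M_def taylor_const_def kernel_const_def using c
    by (intro add_nonneg_nonneg mult_nonneg_nonneg divide_nonneg_nonneg) auto
  have "\<bar>g z * (alpha D \<rho> x z \<epsilon> - beta D \<rho> x z \<epsilon>) * qker D x z\<bar>
      \<le> (Cg * M * \<epsilon>\<^sup>2) * (1 + norm z)^(2 * (m + 4)) * qker D x z" for z
  proof -
    have q0: "0 \<le> qker D x z"
      unfolding qker_product[of D, OF D_pos] by (intro prod_nonneg normal_density_nonneg)
    have "\<bar>g z\<bar> * \<bar>alpha D \<rho> x z \<epsilon> - beta D \<rho> x z \<epsilon>\<bar> \<le> (Cg * (1 + norm z)^m) * (M * (1 + norm z)^4 * \<epsilon>\<^sup>2)"
      using alpha_beta_pointwise[OF D_C2 rho_C2 rho_pos D_pos c B1 B2 B3 e] g[of z] \<open>0 \<le> Cg\<close>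
      unfolding M_def by (intro mult_mono) auto
    also have "\<dots> = (Cg * M * \<epsilon>\<^sup>2) * (1 + norm z)^(m + 4)" by (simp add: power_add mult_ac)
    also have "\<dots> \<le> (Cg * M * \<epsilon>\<^sup>2) * (1 + norm z)^(2 * (m + 4))"
      using \<open>0 \<le> Cg\<close> M0 by (intro mult_left_mono power_increasing) auto
    finally show ?thesis using q0 by (simp add: abs_mult mult_right_mono)
  qed
  from qker_weighted_integral_bound[of D x, OF D_pos _ this]
  show ?thesis using \<open>0 \<le> Cg\<close> M0 by (simp add: M_def mult_ac)
qed

text \<open>The theorem: K(x) = C \<cdot> moment_bound (m + 4) (D x)^n, where m is the growth exponent of g.\<close>
theorem lemma2:
  fixes D \<rho> g :: "real^'n::finite \<Rightarrow> real"
  assumes D_C4: "Ck 4 D"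
    and rho_C4: "Ck 4 \<rho>"
    and rho_pos: "\<forall>x. \<rho> x > 0"
    and D_bdd: "\<forall>is. 1 \<le> length is \<and> length is \<le> 4 \<longrightarrow> bounded (range (partials is D))"
    and lnrho_bdd: "\<forall>is. 1 \<le> length is \<and> length is \<le> 4 \<longrightarrow>
                      bounded (range (partials is (\<lambda>x. ln (\<rho> x))))"
    and D_hess_poly: "\<exists>p. polynomial_fun p \<and> (\<forall>x. norm (hessian D x) \<le> p x)"
    and lnrho_hess_poly: "\<exists>p. polynomial_fun p \<and> (\<forall>x. norm (hessian (\<lambda>y. ln (\<rho> y)) x) \<le> p x)"
    and D_inf: "\<exists>c>0. \<forall>x. c \<le> D x"
    and g_poly: "polynomial_fun g"
  shows "\<exists>K :: real^'n \<Rightarrow> real. (\<exists>C m. \<forall>x. \<bar>K x\<bar> \<le> C * (1 + norm x) ^ m) \<and>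
           (\<forall>x \<epsilon>. 0 < \<epsilon> \<and> \<epsilon> \<le> 1 \<longrightarrow>
              \<bar>LINT z|lborel. g z * (alpha D \<rho> x z \<epsilon> - beta D \<rho> x z \<epsilon>) * qker D x z\<bar>
                \<le> K x * \<epsilon>\<^sup>2)"
proof -
  have D_C2: "Ck 2 D" and rho_C2: "Ck 2 \<rho>" using Ck_mono[OF D_C4, of 2] Ck_mono[OF rho_C4, of 2] by auto
  obtain c where c: "c > 0" "\<And>x. c \<le> D x" using D_inf by blast
  then have D_pos: "\<And>y. 0 < D y" using less_le_trans by blast
  obtain BD where BD: "\<And>i j y. \<bar>partial i D y\<bar> \<le> BD \<and> \<bar>partial i (partial j D) y\<bar> \<le> BD"
    using uniform_partials_bound[of D] D_bdd by auto
  obtain BL where BL: "\<And>i j y. \<bar>partial i (partial j (\<lambda>x. ln (\<rho> x))) y\<bar> \<le> BL"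
    using uniform_partials_bound[of "\<lambda>x. ln (\<rho> x)"] lnrho_bdd by fastforce
  define B where "B = max BD BL"
  have B: "\<And>i y. \<bar>partial i D y\<bar> \<le> B" "\<And>i j y. \<bar>partial i (partial j D) y\<bar> \<le> B"
    "\<And>i j y. \<bar>partial i (partial j (\<lambda>x. ln (\<rho> x))) y\<bar> \<le> B"
    using BD BL by (simp_all add: B_def le_max_iff_disj)
  obtain Cg m where Cg: "0 \<le> Cg" "\<And>z. \<bar>g z\<bar> \<le> Cg * (1 + norm z)^m"
    using polynomial_growth[OF g_poly] by blast
  define C where "C = Cg * taylor_const (real CARD('n)) B c * 4^((m + 4) * CARD('n))"
  define K where "K x = C * moment_bound (m + 4) (D x) ^ CARD('n)" for x
  have estimate: "\<bar>LINT z|lborel. g z * (alpha D \<rho> x z \<epsilon> - beta D \<rho> x z \<epsilon>) * qker D x z\<bar> \<le> K x * \<epsilon>\<^sup>2"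
    if "0 \<le> \<epsilon>" for x \<epsilon>
    unfolding K_def C_def
    by (rule alpha_beta_integral_bound[OF D_C2 rho_C2 _ c B Cg(2) Cg(1) that]) (use rho_pos in blast)
  obtain CK mK where "\<And>x. \<bar>moment_bound (m + 4) (D x) ^ CARD('n)\<bar> \<le> CK * (1 + norm x)^mK"
    using moment_bound_polynomial_growth[OF Ck_mono[OF D_C4, of 1] D_pos B(1), of "m + 4"] by auto
  then have "\<bar>K x\<bar> \<le> (\<bar>C\<bar> * CK) * (1 + norm x)^mK" for x
    unfolding K_def abs_mult mult.assoc by (intro mult_left_mono) auto
  then show ?thesis using estimate by (intro exI[of _ K] conjI) auto
qed

end
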